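(* Let $\mathcal{F}=\bigcup_{d=1}^D\mathcal{F}^{(d)}$ be a trans-dimensional family stable by conditioning, whose members have everywhere-positive densities on $\mathbb{R}^d$. Then its meta family $\mathrm{Meta}(\mathcal{F})=\bigcup_{d=1}^D\mathrm{Meta}(\mathcal{F}^{(d)})$ is stable by conditioning: if $\mathbf{X}$ has cdf $C_\theta(F_1(x_1),\dots,F_d(x_d))$ with $\theta\in\Theta^{(d)}$ and $F_1,\dots,F_d$ absolutely continuous strictly increasing cdfs with positive densities, then for all disjoint strictly increasing index tuples $\mathbf{i}$ (length $\ell\ge1$), $\mathbf{j}$ (length $m\ge1$), $\ell+m\le d$, and every conditioning value $\mathbf{x}_{\mathbf{j}}$, the conditional distribution of $\mathbf{X}_{\mathbf{i}}$ given $\mathbf{X}_{\mathbf{j}}=\mathbf{x}_{\mathbf{j}}$ belongs to $\mathrm{Meta}(\mathcal{F}^{(\ell)})$.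
   Context: For each $d$, $\mathcal{F}^{(d)}=\{F_\theta:\theta\in\Theta^{(d)}\}$ is a parametric family of distributions on $\mathbb{R}^d$ with everywhere-positive densities (hence continuous strictly increasing univariate margins), and $C_\theta$ denotes the (unique, by Sklar's theorem) copula of $F_\theta$, i.e. $C_\theta(u_1,\dots,u_d)=F_\theta(\Psi_{1,\theta}^{-1}(u_1),\dots,\Psi_{d,\theta}^{-1}(u_d))$ with $\Psi_{i,\theta}$ the $i$-th marginal cdf of $F_\theta$. The meta family is $\mathrm{Meta}(\mathcal{F}^{(d)})=\{C_\theta\circ(F_1,\dots,F_d):\theta\in\Theta^{(d)},\ F_1,\dots,F_d$ absolutely continuous strictly increasing cdfs on $\mathbb{R}\}$. $\mathcal{F}$ is stable by conditioning if for every $d$, $\theta\in\Theta^{(d)}$, disjoint strictly increasing $\mathbf{i},\mathbf{j}$ of lengths $\ell,m\ge1$ with $\ell+m\le d$ and every conditioning value $\mathbf{z}_{\mathbf{j}}\in\mathbb{R}^m$, the conditional law of the $\mathbf{i}$-coordinates given the $\mathbf{j}$-coordinates equal to $\mathbf{z}_{\mathbf{j}}$ under $F_\theta$ belongs to $\mathcal{F}^{(\ell)}$. *)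

theory Defs
  imports "HOL-Probability.Probability"
begin

text \<open>Euclidean space R^d, points are functions nat => real, extensional on {..<d}.\<close>
definition Rn :: "nat \<Rightarrow> (nat \<Rightarrow> real) measure" where
  "Rn d = PiM {..<d} (\<lambda>_. lborel)"

definition distr_on :: "nat \<Rightarrow> (nat \<Rightarrow> real) measure \<Rightarrow> bool" where
  "distr_on d M \<longleftrightarrow> prob_space M \<and> sets M = sets (Rn d)"

definition has_pos_density :: "nat \<Rightarrow> (nat \<Rightarrow> real) measure \<Rightarrow> bool" where
  "has_pos_density d M \<longleftrightarrow>
     (\<exists>f :: (nat \<Rightarrow> real) \<Rightarrow> real. (\<forall>x. 0 < f x) \<and> f \<in> borel_measurable (Rn d)
        \<and> M = density (Rn d) (\<lambda>x. ennreal (f x)))"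

definition mcdf :: "nat \<Rightarrow> (nat \<Rightarrow> real) measure \<Rightarrow> (nat \<Rightarrow> real) \<Rightarrow> real" where
  "mcdf d M x = measure M {y \<in> space (Rn d). \<forall>k<d. y k \<le> x k}"

definition marg_cdf :: "(nat \<Rightarrow> real) measure \<Rightarrow> nat \<Rightarrow> real \<Rightarrow> real" where
  "marg_cdf M k t = measure M {y \<in> space M. y k \<le> t}"

definition copula :: "nat \<Rightarrow> (nat \<Rightarrow> real) measure \<Rightarrow> (nat \<Rightarrow> real) \<Rightarrow> real" where
  "copula d M u = mcdf d M (\<lambda>k. inv_into UNIV (marg_cdf M k) (u k))"

definition ac_strict_cdf :: "(real \<Rightarrow> real) \<Rightarrow> bool" where
  "ac_strict_cdf Fc \<longleftrightarrow>
     (\<exists>N. real_distribution N \<and> absolutely_continuous lborel N \<and> Fc = cdf N) \<and> strict_mono Fc"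

definition pos_density_cdf :: "(real \<Rightarrow> real) \<Rightarrow> bool" where
  "pos_density_cdf Fc \<longleftrightarrow>
     (\<exists>f :: real \<Rightarrow> real. (\<forall>t. 0 < f t) \<and> f \<in> borel_measurable borel \<and>
        real_distribution (density lborel (\<lambda>t. ennreal (f t))) \<and>
        Fc = cdf (density lborel (\<lambda>t. ennreal (f t))))"

definition Meta :: "(nat \<Rightarrow> (nat \<Rightarrow> real) measure set) \<Rightarrow> nat \<Rightarrow> (nat \<Rightarrow> real) measure set" where
  "Meta Fam d = {N. distr_on d N \<and>
     (\<exists>M\<in>Fam d. \<exists>Fs :: nat \<Rightarrow> real \<Rightarrow> real. (\<forall>k<d. ac_strict_cdf (Fs k)) \<and>
        (\<forall>x. mcdf d N x = copula d M (\<lambda>k. Fs k (x k))))}"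

definition proj :: "nat list \<Rightarrow> (nat \<Rightarrow> real) \<Rightarrow> (nat \<Rightarrow> real)" where
  "proj is x = restrict (\<lambda>k. x (is ! k)) {..<length is}"

definition valid_idx :: "nat \<Rightarrow> nat list \<Rightarrow> nat list \<Rightarrow> bool" where
  "valid_idx d is js \<longleftrightarrow> sorted_wrt (<) is \<and> sorted_wrt (<) js \<and>
     is \<noteq> [] \<and> js \<noteq> [] \<and> set is \<inter> set js = {} \<and> set is \<subseteq> {..<d} \<and> set js \<subseteq> {..<d}"

text \<open>K is a (regular) conditional distribution of X_is given X_js = z under M.\<close>
definition is_cond_law :: "(nat \<Rightarrow> real) measure \<Rightarrow> nat list \<Rightarrow> nat list
     \<Rightarrow> ((nat \<Rightarrow> real) \<Rightarrow> (nat \<Rightarrow> real) measure) \<Rightarrow> bool" where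
  "is_cond_law M is js K \<longleftrightarrow>
     (\<forall>z\<in>space (Rn (length js)). distr_on (length is) (K z)) \<and>
     (\<forall>A\<in>sets (Rn (length is)).
        (\<lambda>z. measure (K z) A) \<in> borel_measurable (Rn (length js))) \<and>
     (\<forall>A\<in>sets (Rn (length is)). \<forall>B\<in>sets (Rn (length js)).
        measure M {x \<in> space M. proj is x \<in> A \<and> proj js x \<in> B}
          = (\<integral>z. indicator B z * measure (K z) A \<partial>(distr M (Rn (length js)) (proj js))))"

definition stable_cond :: "(nat \<Rightarrow> (nat \<Rightarrow> real) measure set) \<Rightarrow> nat \<Rightarrow> bool" where
  "stable_cond Fam D \<longleftrightarrow>
     (\<forall>d\<in>{1..D}. \<forall>M\<in>Fam d. \<forall>is js. valid_idx d is js \<longrightarrow>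
        (\<exists>K. is_cond_law M is js K \<and> (\<forall>z\<in>space (Rn (length js)). K z \<in> Fam (length is))))"

end

theory Submission imports Defs begin

text \<open>Let \<open>\<Psi>\<^sub>k\<close> be the margins of \<open>M \<in> Fam d\<close>. As \<open>N\<close> has the copula of \<open>M\<close> and margins \<open>F\<^sub>k\<close>, it is
  the image of \<open>M\<close> under the coordinatewise increasing map \<open>T = (F\<^sub>k\<^sup>-\<^sup>1 \<circ> \<Psi>\<^sub>k)\<^sub>k\<close>. Coordinatewise
  maps commute with taking sub-vectors, so a conditional law \<open>K\<close> of \<open>M\<^sub>i\<close> given \<open>M\<^sub>j\<close> transports
  to one of \<open>N\<close>: at \<open>z\<close> it is the image of \<open>K(T\<^sub>j\<^sup>-\<^sup>1 z)\<close> under \<open>T\<^sub>i\<close>. By stability \<open>K(w) \<in> Fam \<ell>\<close>,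
  and its image under \<open>T\<^sub>i\<close> keeps its copula and has strictly increasing, absolutely continuous
  margins: since \<open>K(w)\<close> and \<open>M\<close> have positive densities, \<open>T\<^sub>i\<close> pulls Lebesgue null sets back to
  null sets.\<close>

lemma space_Rn: "space (Rn d) = PiE {..<d} (\<lambda>_. UNIV)"
  by (simp add: Rn_def space_PiM)

lemma measurable_component_Rn [measurable]: "i < d \<Longrightarrow> (\<lambda>y. y i) \<in> borel_measurable (Rn d)"
  unfolding Rn_def by (auto intro: measurable_component_singleton)

lemma sets_Rn_orthant: "{y \<in> space (Rn n). \<forall>k<n. y k \<le> x k} \<in> sets (Rn n)"
proof -
  have "{y \<in> space (Rn n). \<forall>k<n. y k \<le> x k} = (\<Inter>k\<in>{..<n}. {y \<in> space (Rn n). y k \<le> x k}) \<inter> space (Rn n)"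
    by auto
  also have "\<dots> \<in> sets (Rn n)"
  proof (cases "n = 0")
    case True then show ?thesis by simp
  next
    case False
    have "(\<Inter>k\<in>{..<n}. {y \<in> space (Rn n). y k \<le> x k}) \<in> sets (Rn n)"
    proof (rule sets.finite_INT)
      fix k assume "k \<in> {..<n}"
      then have "(\<lambda>y. y k) \<in> borel_measurable (Rn n)" by (intro measurable_component_Rn) auto
      then show "{y \<in> space (Rn n). y k \<le> x k} \<in> sets (Rn n)" by measurable
    qed (use False in auto)
    then show ?thesis by auto
  qed
  finally show ?thesis .
qed

lemma sets_Rn_eq_sigma_orthants:
  "sets (Rn d) = sigma_sets (PiE {..<d} (\<lambda>_. UNIV))
     {{f \<in> PiE {..<d} (\<lambda>_. UNIV). \<forall>i\<in>{..<d}. f i \<in> A i} | A. A \<in> Pi {..<d} (\<lambda>_. range atMost)}"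
proof -
  have "sets (Rn d) = sets (PiM {..<d} (\<lambda>_. sigma (UNIV::real set) (range atMost)))"
    unfolding Rn_def by (rule sets_PiM_cong) (auto simp: borel_eq_atMost)
  also have "\<dots> = sets (sigma (PiE {..<d} (\<lambda>_. UNIV))
     {{f \<in> PiE {..<d} (\<lambda>_. UNIV). \<forall>i\<in>j. f i \<in> A i} | A j. j \<in> {{..<d}} \<and> A \<in> Pi j (\<lambda>_. range atMost)})"
  proof (rule sets_PiM_sigma)
    show "\<exists>S\<subseteq>range atMost. countable S \<and> (UNIV::real set) = \<Union>S" for i :: nat
      by (intro exI[of _ "range (\<lambda>n::nat. {..real n})"]) (auto intro: real_arch_simple)
  qed auto
  also have "\<dots> = sigma_sets (PiE {..<d} (\<lambda>_. UNIV))
     {{f \<in> PiE {..<d} (\<lambda>_. UNIV). \<forall>i\<in>{..<d}. f i \<in> A i} | A. A \<in> Pi {..<d} (\<lambda>_. range atMost)}"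
    by (subst sets_measure_of) auto
  finally show ?thesis .
qed

lemma emeasure_Rn_cylinder_eq_0_iff:
  assumes "i < d" "S \<in> sets borel"
  shows "emeasure (Rn d) {y \<in> space (Rn d). y i \<in> S} = 0 \<longleftrightarrow> emeasure lborel S = 0"
proof -
  interpret ps: product_sigma_finite "\<lambda>_::nat. lborel::real measure"
    by unfold_locales
  have eqX: "{y \<in> space (Rn d). y i \<in> S} = PiE {..<d} (\<lambda>j. if j = i then S else UNIV)"
  proof (intro set_eqI iffI)
    fix y assume "y \<in> {y \<in> space (Rn d). y i \<in> S}"
    then show "y \<in> PiE {..<d} (\<lambda>j. if j = i then S else UNIV)"
      unfolding space_Rn by (simp add: PiE_iff)
  next
    fix y assume "y \<in> PiE {..<d} (\<lambda>j. if j = i then S else UNIV)"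
    then show "y \<in> {y \<in> space (Rn d). y i \<in> S}"
      unfolding space_Rn using assms(1) by (simp add: PiE_iff) (metis lessThan_iff)
  qed
  have "emeasure (Rn d) {y \<in> space (Rn d). y i \<in> S} = emeasure (Rn d) (PiE {..<d} (\<lambda>j. if j = i then S else UNIV))"
    by (simp only: eqX)
  also have "\<dots> = (\<Prod>j<d. emeasure lborel (if j = i then S else UNIV))"
    unfolding Rn_def using assms by (intro ps.emeasure_PiM) auto
  also have "\<dots> = 0 \<longleftrightarrow> emeasure lborel S = 0"
    using assms(1) by (auto simp: prod_zero_iff split: if_splits)
  finally show ?thesis .
qed

lemma distr_on_sets: "distr_on d P \<Longrightarrow> sets P = sets (Rn d)"
  by (simp add: distr_on_def)

lemma distr_on_space: "distr_on d P \<Longrightarrow> space P = space (Rn d)"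
  by (metis distr_on_sets sets_eq_imp_space_eq)

lemma distr_on_measurable: "distr_on d P \<Longrightarrow> f \<in> measurable (Rn d) X \<Longrightarrow> f \<in> measurable P X"
  using measurable_cong_sets[OF distr_on_sets[of d P] refl] by blast

lemma distr_on_distr:
  assumes "distr_on n P" "f \<in> measurable (Rn n) (Rn n')"
  shows "distr_on n' (distr P (Rn n') f)"
  using assms distr_on_measurable[OF assms] unfolding distr_on_def
  by (auto intro: prob_space.prob_space_distr)

lemma measure_distr_on:
  assumes "distr_on n P" "f \<in> measurable (Rn n) (Rn n')" "S \<in> sets (Rn n')"
  shows "measure (distr P (Rn n') f) S = measure P (f -` S \<inter> space (Rn n))"
  using assms distr_on_measurable[OF assms(1,2)] by (simp add: measure_distr distr_on_space)

lemma measure_marginal: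
  assumes P: "distr_on d P" and i: "i < d" and S: "S \<in> sets borel"
  shows "measure (distr P borel (\<lambda>y. y i)) S = measure P {y \<in> space P. y i \<in> S}"
proof -
  have "(\<lambda>y. y i) \<in> borel_measurable P"
    using P measurable_component_Rn[OF i] by (rule distr_on_measurable)
  then have "measure (distr P borel (\<lambda>y. y i)) S = measure P ((\<lambda>y. y i) -` S \<inter> space P)"
    using S by (rule measure_distr)
  also have "(\<lambda>y. y i) -` S \<inter> space P = {y \<in> space P. y i \<in> S}" by auto
  finally show ?thesis .
qed

lemma marg_cdf_eq_cdf:
  assumes P: "distr_on d P" and i: "i < d"
  shows "marg_cdf P i = cdf (distr P borel (\<lambda>y. y i))"
    and "real_distribution (distr P borel (\<lambda>y. y i))"
proof -
  interpret prob_space P using P by (simp add: distr_on_def)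
  have "(\<lambda>y. y i) \<in> borel_measurable P"
    using P measurable_component_Rn[OF i] by (rule distr_on_measurable)
  then show "real_distribution (distr P borel (\<lambda>y. y i))"
    unfolding real_distribution_def real_distribution_axioms_def by (auto intro: prob_space_distr)
  show "marg_cdf P i = cdf (distr P borel (\<lambda>y. y i))"
  proof
    fix t
    show "marg_cdf P i t = cdf (distr P borel (\<lambda>y. y i)) t"
      using measure_marginal[OF P i, of "{..t}"] by (simp add: marg_cdf_def cdf_def)
  qed
qed

text \<open>The orthants form an \<open>\<inter>\<close>-stable generator of the Borel sets of \<open>\<real>\<^sup>d\<close>.\<close>
lemma distr_on_eqI_mcdf:
  assumes P: "distr_on d P" and Q: "distr_on d Q" and eq: "\<And>x. mcdf d P x = mcdf d Q x"
  shows "P = Q"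
proof -
  let ?\<Omega> = "PiE {..<d} (\<lambda>_. UNIV::real set)"
  let ?E = "{{f \<in> ?\<Omega>. \<forall>i\<in>{..<d}. f i \<in> A i} | A. A \<in> Pi {..<d} (\<lambda>_. range atMost)}"
  let ?cube = "\<lambda>n::nat. {f \<in> ?\<Omega>. \<forall>i\<in>{..<d}. f i \<in> {..real n}}"
  interpret P: prob_space P using P by (simp add: distr_on_def)
  interpret Q: prob_space Q using Q by (simp add: distr_on_def)
  show ?thesis
  proof (rule measure_eqI_generator_eq[where \<Omega>="?\<Omega>" and E="?E" and A="?cube"])
    show "Int_stable ?E"
    proof (rule Int_stableI)
      fix a b assume "a \<in> ?E" "b \<in> ?E"
      then obtain A B where a: "a = {f \<in> ?\<Omega>. \<forall>i\<in>{..<d}. f i \<in> A i}" "A \<in> Pi {..<d} (\<lambda>_. range atMost)"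
        and b: "b = {f \<in> ?\<Omega>. \<forall>i\<in>{..<d}. f i \<in> B i}" "B \<in> Pi {..<d} (\<lambda>_. range atMost)"
        by blast
      have "A i \<inter> B i \<in> range atMost" if "i \<in> {..<d}" for i
      proof -
        obtain x y where "A i = {..x}" "B i = {..y}" using a b \<open>i \<in> {..<d}\<close> by blast
        then have "A i \<inter> B i = {..min x y}" by auto
        then show ?thesis by blast
      qed
      then show "a \<inter> b \<in> ?E"
        using a b by (intro CollectI exI[where x="\<lambda>i. A i \<inter> B i"]) auto
    qed
    show "?E \<subseteq> Pow ?\<Omega>" by auto
    show "sets P = sigma_sets ?\<Omega> ?E" "sets Q = sigma_sets ?\<Omega> ?E"
      using P Q by (simp_all add: distr_on_sets sets_Rn_eq_sigma_orthants)
    show "range ?cube \<subseteq> ?E"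
    proof (rule image_subsetI)
      show "?cube n \<in> ?E" for n
        by (intro CollectI exI[where x="\<lambda>i. {..real n}"]) auto
    qed
    show "(\<Union>n. ?cube n) = ?\<Omega>"
    proof (intro equalityI subsetI)
      fix f assume f: "f \<in> ?\<Omega>"
      obtain n :: nat where n: "(\<Sum>i<d. \<bar>f i\<bar>) \<le> real n" using real_arch_simple by blast
      have "f i \<le> real n" if "i < d" for i
      proof -
        have "f i \<le> (\<Sum>i<d. \<bar>f i\<bar>)"
          using that abs_ge_self order_trans member_le_sum[of i "{..<d}" "\<lambda>i. \<bar>f i\<bar>"] by fastforce
        then show ?thesis using n by linarith
      qed
      then show "f \<in> (\<Union>n. ?cube n)" using f by blast
    qed blast
    show "emeasure P (?cube n) \<noteq> \<infinity>" for n by simp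
    fix X assume "X \<in> ?E"
    then obtain A where X: "X = {f \<in> ?\<Omega>. \<forall>i\<in>{..<d}. f i \<in> A i}" and A: "A \<in> Pi {..<d} (\<lambda>_. range atMost)"
      by blast
    have "\<forall>i\<in>{..<d}. \<exists>x. A i = {..x}" using A by blast
    then obtain x where "\<forall>i\<in>{..<d}. A i = {..x i}" by metis
    then have "X = {y \<in> space (Rn d). \<forall>k<d. y k \<le> x k}" by (auto simp: X space_Rn)
    then show "emeasure P X = emeasure Q X"
      using eq[of x] by (simp add: mcdf_def P.emeasure_eq_measure Q.emeasure_eq_measure)
  qed
qed

lemma has_pos_density_cylinder_null_iff:
  assumes P: "distr_on d P" and hp: "has_pos_density d P" and i: "i < d" and S: "S \<in> sets borel"
  shows "measure P {y \<in> space P. y i \<in> S} = 0 \<longleftrightarrow> emeasure lborel S = 0"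
proof -
  obtain f where f: "\<forall>x. 0 < f x" "f \<in> borel_measurable (Rn d)"
    and P_eq: "P = density (Rn d) (\<lambda>x. ennreal (f x))"
    using hp by (auto simp: has_pos_density_def)
  interpret prob_space P using P by (simp add: distr_on_def)
  let ?X = "{y \<in> space (Rn d). y i \<in> S}"
  have X: "?X \<in> sets (Rn d)" using i S by measurable
  have "measure P {y \<in> space P. y i \<in> S} = 0 \<longleftrightarrow> emeasure P ?X = 0"
    by (simp add: distr_on_space[OF P] emeasure_eq_measure)
  also have "emeasure P ?X = (\<integral>\<^sup>+ y. ennreal (f y) * indicator ?X y \<partial>Rn d)"
    unfolding P_eq using X f by (simp add: emeasure_density)
  also have "\<dots> = 0 \<longleftrightarrow> (AE y in Rn d. ennreal (f y) * indicator ?X y = 0)"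
    using X f(2)
    by (intro nn_integral_0_iff_AE borel_measurable_times_ennreal borel_measurable_indicator
        measurable_compose[OF f(2) measurable_ennreal]) auto
  also have "\<dots> \<longleftrightarrow> (AE y in Rn d. y \<notin> ?X)"
  proof (rule AE_cong)
    fix y
    have "ennreal (f y) \<noteq> 0" using f(1) by (simp add: ennreal_eq_0_iff not_le)
    then show "ennreal (f y) * indicator ?X y = 0 \<longleftrightarrow> y \<notin> ?X" by (simp add: indicator_def)
  qed
  also have "\<dots> \<longleftrightarrow> emeasure (Rn d) ?X = 0"
    using X by (intro AE_iff_measurable) auto
  also have "\<dots> \<longleftrightarrow> emeasure lborel S = 0"
    using i S by (rule emeasure_Rn_cylinder_eq_0_iff)
  finally show ?thesis .
qed

lemma range_cdf_strict_mono_continuous: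
  assumes Q: "real_distribution Q" and sm: "strict_mono (cdf Q)" and atoms: "\<And>x. measure Q {x} = 0"
  shows "range (cdf Q) = {0<..<1}"
proof (intro equalityI subsetI)
  interpret real_distribution Q by (rule Q)
  fix u assume "u \<in> range (cdf Q)"
  then obtain x where u: "u = cdf Q x" by blast
  have "cdf Q (x - 1) < cdf Q x" "cdf Q x < cdf Q (x + 1)" using sm by (auto simp: strict_mono_def)
  moreover have "0 \<le> cdf Q (x - 1)" "cdf Q (x + 1) \<le> 1" using cdf_nonneg cdf_bounded_prob by auto
  ultimately show "u \<in> {0<..<1}" using u by auto
next
  interpret real_distribution Q by (rule Q)
  fix u :: real assume u: "u \<in> {0<..<1}"
  have "eventually (\<lambda>x. cdf Q x < u) at_bot"
    using u by (intro order_tendstoD(2)[OF cdf_lim_at_bot]) auto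
  then obtain a where a: "\<And>x. x \<le> a \<Longrightarrow> cdf Q x < u" by (auto simp: eventually_at_bot_linorder)
  have "eventually (\<lambda>x. u < cdf Q x) at_top"
    using u by (intro order_tendstoD(1)[OF cdf_lim_at_top_prob]) auto
  then obtain b where b: "\<And>x. x \<ge> b \<Longrightarrow> u < cdf Q x" by (auto simp: eventually_at_top_linorder)
  have "\<exists>x. a \<le> x \<and> x \<le> max a b \<and> cdf Q x = u"
  proof (rule IVT')
    show "continuous_on {a..max a b} (cdf Q)"
      using atoms isCont_cdf by (intro continuous_at_imp_continuous_on) auto
  qed (use a[of a] b[of "max a b"] in auto)
  then show "u \<in> range (cdf Q)" by (metis rangeI)
qed

lemma pos_density_marg_cdf:
  assumes P: "distr_on d P" and hp: "has_pos_density d P" and i: "i < d"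
  shows "strict_mono (marg_cdf P i)" and "range (marg_cdf P i) = {0<..<1}"
proof -
  let ?Q = "distr P borel (\<lambda>y. y i)"
  note Q = marg_cdf_eq_cdf[OF P i]
  interpret real_distribution ?Q by (rule Q(2))
  have null_iff: "measure ?Q S = 0 \<longleftrightarrow> emeasure lborel S = 0" if "S \<in> sets borel" for S
    using measure_marginal[OF P i that] has_pos_density_cylinder_null_iff[OF P hp i that] by simp
  have "strict_mono (cdf ?Q)"
  proof (rule strict_monoI)
    fix a b :: real assume "a < b"
    then have "measure ?Q {a<..b} \<noteq> 0" using null_iff[of "{a<..b}"] by simp
    then show "cdf ?Q a < cdf ?Q b"
      using cdf_diff_eq[OF \<open>a < b\<close>] measure_nonneg[of ?Q "{a<..b}"] by linarith
  qed
  moreover have "measure ?Q {x} = 0" for x using null_iff[of "{x}"] by simp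
  ultimately show "strict_mono (marg_cdf P i)" "range (marg_cdf P i) = {0<..<1}"
    using range_cdf_strict_mono_continuous[OF Q(2)] Q(1) by simp_all
qed

lemma ac_strict_cdf_range: "ac_strict_cdf F \<Longrightarrow> range F = {0<..<1}"
proof -
  assume "ac_strict_cdf F"
  then obtain Q where Q: "real_distribution Q" "absolutely_continuous lborel Q" "F = cdf Q"
    and sm: "strict_mono F" by (auto simp: ac_strict_cdf_def)
  interpret real_distribution Q by (rule Q(1))
  have "{x} \<in> null_sets Q" for x
  proof -
    have "{x} \<in> null_sets lborel" by (simp add: null_sets_def)
    then show ?thesis using Q(2) unfolding absolutely_continuous_def by blast
  qed
  then have "measure Q {x} = 0" for x by (simp add: emeasure_eq_measure null_sets_def)
  then show ?thesis using range_cdf_strict_mono_continuous[OF Q(1)] sm Q(3) by simp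
qed

text \<open>\<open>\<phi>\<close> is the lower adjoint of \<open>\<psi>\<close>; the coordinatewise maps of the meta construction
  are of this form with \<open>\<phi> = F\<^sup>-\<^sup>1 \<circ> \<Psi>\<close> and \<open>\<psi> = \<Psi>\<^sup>-\<^sup>1 \<circ> F\<close>.\<close>
definition increasing_galois :: "(real \<Rightarrow> real) \<Rightarrow> (real \<Rightarrow> real) \<Rightarrow> bool" where
  "increasing_galois \<phi> \<psi> \<longleftrightarrow> strict_mono \<phi> \<and> strict_mono \<psi> \<and> (\<forall>t x. \<phi> t \<le> x \<longleftrightarrow> t \<le> \<psi> x)"

lemma increasing_galois_left_inverse:
  assumes "increasing_galois \<phi> \<psi>"
  shows "\<psi> (\<phi> t) = t"
proof (rule antisym)
  show "t \<le> \<psi> (\<phi> t)" using assms by (auto simp: increasing_galois_def)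
  show "\<psi> (\<phi> t) \<le> t"
  proof (rule ccontr)
    assume "\<not> \<psi> (\<phi> t) \<le> t"
    then have "\<phi> t < \<phi> (\<psi> (\<phi> t))" using assms by (simp add: increasing_galois_def strict_mono_less)
    moreover have "\<phi> (\<psi> (\<phi> t)) \<le> \<phi> t" using assms by (simp add: increasing_galois_def)
    ultimately show False by simp
  qed
qed

lemma increasing_galois_vimage_atMost: "increasing_galois \<phi> \<psi> \<Longrightarrow> \<phi> -` {..x} = {..\<psi> x}"
  by (auto simp: increasing_galois_def)

lemma increasing_galois_measurable:
  assumes "increasing_galois \<phi> \<psi>"
  shows "\<phi> \<in> borel_measurable borel" and "\<psi> \<in> borel_measurable borel"
  using assms by (auto simp: increasing_galois_def intro: borel_measurable_mono strict_mono_mono)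

lemma quantile_increasing_galois:
  fixes F \<Psi> :: "real \<Rightarrow> real"
  assumes F: "strict_mono F" and \<Psi>: "strict_mono \<Psi>" and range: "range F = range \<Psi>"
  shows "increasing_galois (\<lambda>t. inv_into UNIV F (\<Psi> t)) (\<lambda>x. inv_into UNIV \<Psi> (F x))"
    and "\<Psi> (inv_into UNIV \<Psi> (F x)) = F x"
proof -
  have F_inv: "F (inv_into UNIV F (\<Psi> t)) = \<Psi> t" for t
    using range by (metis f_inv_into_f rangeI)
  show \<Psi>_inv: "\<Psi> (inv_into UNIV \<Psi> (F x)) = F x" for x
    using range by (metis f_inv_into_f rangeI)
  have "strict_mono (\<lambda>t. inv_into UNIV F (\<Psi> t))"
    using F \<Psi> F_inv by (metis (no_types, lifting) strict_mono_def strict_mono_less)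
  moreover have "strict_mono (\<lambda>x. inv_into UNIV \<Psi> (F x))"
    using F \<Psi> \<Psi>_inv by (metis (no_types, lifting) strict_mono_def strict_mono_less)
  moreover have "inv_into UNIV F (\<Psi> t) \<le> x \<longleftrightarrow> t \<le> inv_into UNIV \<Psi> (F x)" for t x
    by (metis F \<Psi> F_inv \<Psi>_inv strict_mono_less_eq)
  ultimately show "increasing_galois (\<lambda>t. inv_into UNIV F (\<Psi> t)) (\<lambda>x. inv_into UNIV \<Psi> (F x))"
    by (simp add: increasing_galois_def)
qed

definition coordmap :: "(nat \<Rightarrow> real \<Rightarrow> real) \<Rightarrow> nat \<Rightarrow> (nat \<Rightarrow> real) \<Rightarrow> (nat \<Rightarrow> real)" where
  "coordmap \<phi> n y = restrict (\<lambda>k. \<phi> k (y k)) {..<n}"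

lemma coordmap_in_space: "coordmap \<phi> n y \<in> space (Rn n)"
  unfolding coordmap_def space_Rn by (simp add: PiE_iff)

lemma coordmap_apply: "k < n \<Longrightarrow> coordmap \<phi> n y k = \<phi> k (y k)"
  unfolding coordmap_def by simp

lemma measurable_coordmap:
  assumes "\<And>k. k < n \<Longrightarrow> \<phi> k \<in> borel_measurable borel"
  shows "coordmap \<phi> n \<in> measurable (Rn n) (Rn n)"
proof -
  have "(\<lambda>y. restrict (\<lambda>k. \<phi> k (y k)) {..<n}) \<in> measurable (Rn n) (PiM {..<n} (\<lambda>_. lborel))"
  proof (rule measurable_restrict)
    fix k assume k: "k \<in> {..<n}"
    have "(\<lambda>y. \<phi> k (y k)) \<in> borel_measurable (Rn n)"
      using k assms[of k] measurable_component_Rn[of k n]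
      by (intro measurable_compose[where f="\<lambda>y. y k" and g="\<phi> k"]) auto
    then show "(\<lambda>y. \<phi> k (y k)) \<in> measurable (Rn n) lborel" by simp
  qed
  then show ?thesis unfolding coordmap_def[abs_def] Rn_def by simp
qed

lemma coordmap_left_inverse:
  assumes "\<And>k t. k < n \<Longrightarrow> \<psi> k (\<phi> k t) = t" and "y \<in> space (Rn n)"
  shows "coordmap \<psi> n (coordmap \<phi> n y) = y"
proof
  fix k show "coordmap \<psi> n (coordmap \<phi> n y) k = y k"
  proof (cases "k < n")
    case True then show ?thesis using assms by (simp add: coordmap_apply)
  next
    case False then show ?thesis using assms(2) by (simp add: coordmap_def space_Rn PiE_iff extensional_def)
  qed
qed

lemma proj_in_space: "proj ixs y \<in> space (Rn (length ixs))"
  unfolding proj_def space_Rn by (simp add: PiE_iff)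

lemma measurable_proj:
  assumes "set ixs \<subseteq> {..<d}"
  shows "proj ixs \<in> measurable (Rn d) (Rn (length ixs))"
proof -
  have "(\<lambda>y. restrict (\<lambda>k. y (ixs ! k)) {..<length ixs}) \<in> measurable (Rn d) (PiM {..<length ixs} (\<lambda>_. lborel))"
  proof (rule measurable_restrict)
    fix k assume "k \<in> {..<length ixs}"
    then have "ixs ! k < d" using assms nth_mem by fastforce
    then have "(\<lambda>y. y (ixs ! k)) \<in> borel_measurable (Rn d)" by (rule measurable_component_Rn)
    then show "(\<lambda>y. y (ixs ! k)) \<in> measurable (Rn d) lborel" by simp
  qed
  then show ?thesis unfolding proj_def[abs_def] Rn_def by simp
qed

lemma proj_coordmap:
  assumes "set ixs \<subseteq> {..<d}"
  shows "proj ixs (coordmap \<phi> d y) = coordmap (\<lambda>k. \<phi> (ixs ! k)) (length ixs) (proj ixs y)"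
proof
  fix k
  show "proj ixs (coordmap \<phi> d y) k = coordmap (\<lambda>k. \<phi> (ixs ! k)) (length ixs) (proj ixs y) k"
  proof (cases "k < length ixs")
    case True
    then have "ixs ! k < d" using assms nth_mem by fastforce
    then show ?thesis using True by (simp add: proj_def coordmap_apply)
  qed (simp add: proj_def coordmap_def)
qed

lemma mcdf_cong: "(\<And>k. k < n \<Longrightarrow> x k = x' k) \<Longrightarrow> mcdf n P x = mcdf n P x'"
  unfolding mcdf_def by (metis (no_types, lifting))

lemma mcdf_distr_coordmap:
  assumes P: "distr_on n P" and gal: "\<And>k. k < n \<Longrightarrow> increasing_galois (\<phi> k) (\<psi> k)"
  shows "mcdf n (distr P (Rn n) (coordmap \<phi> n)) x = mcdf n P (\<lambda>k. \<psi> k (x k))"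
proof -
  have meas: "coordmap \<phi> n \<in> measurable (Rn n) (Rn n)"
    using gal increasing_galois_measurable by (intro measurable_coordmap) blast
  have "coordmap \<phi> n -` {y \<in> space (Rn n). \<forall>k<n. y k \<le> x k} \<inter> space (Rn n)
      = {y \<in> space (Rn n). \<forall>k<n. y k \<le> \<psi> k (x k)}"
    using gal by (auto simp: coordmap_apply coordmap_in_space increasing_galois_def)
  then show ?thesis
    unfolding mcdf_def using measure_distr_on[OF P meas sets_Rn_orthant] by simp
qed

lemma measure_distr_coordmap_cylinder:
  assumes P: "distr_on n P" and meas: "\<And>k. k < n \<Longrightarrow> \<phi> k \<in> borel_measurable borel"
    and k: "k < n" and S: "S \<in> sets borel"
  shows "measure (distr P (Rn n) (coordmap \<phi> n)) {y \<in> space (Rn n). y k \<in> S}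
       = measure P {y \<in> space P. y k \<in> \<phi> k -` S}"
proof -
  have "{y \<in> space (Rn n). y k \<in> S} = (\<lambda>y. y k) -` S \<inter> space (Rn n)" by auto
  then have cyl: "{y \<in> space (Rn n). y k \<in> S} \<in> sets (Rn n)"
    using measurable_sets[OF measurable_component_Rn[OF k] S] by simp
  have "coordmap \<phi> n -` {y \<in> space (Rn n). y k \<in> S} \<inter> space (Rn n) = {y \<in> space P. y k \<in> \<phi> k -` S}"
    using k by (auto simp: coordmap_apply coordmap_in_space distr_on_space[OF P])
  then show ?thesis
    using measure_distr_on[OF P measurable_coordmap[OF meas] cyl] by simp
qed

lemma marg_cdf_distr_coordmap:
  assumes P: "distr_on n P" and gal: "\<And>k. k < n \<Longrightarrow> increasing_galois (\<phi> k) (\<psi> k)" and k: "k < n"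
  shows "marg_cdf (distr P (Rn n) (coordmap \<phi> n)) k t = marg_cdf P k (\<psi> k t)"
  using measure_distr_coordmap_cylinder[OF P _ k, of \<phi> "{..t}"] gal[OF k]
    increasing_galois_measurable[OF gal] increasing_galois_vimage_atMost[OF gal[OF k]]
  by (simp add: marg_cdf_def)

lemma ac_strict_cdf_marg_cdfI:
  assumes Q: "distr_on n Q" and k: "k < n" and sm: "strict_mono (marg_cdf Q k)"
    and null: "\<And>S. S \<in> null_sets lborel \<Longrightarrow> measure Q {y \<in> space Q. y k \<in> S} = 0"
  shows "ac_strict_cdf (marg_cdf Q k)"
proof -
  let ?R = "distr Q borel (\<lambda>y. y k)"
  note R = marg_cdf_eq_cdf[OF Q k]
  interpret real_distribution ?R by (rule R(2))
  have "absolutely_continuous lborel ?R"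
    unfolding absolutely_continuous_def
  proof
    fix S :: "real set" assume S: "S \<in> null_sets lborel"
    then have "measure ?R S = 0" using measure_marginal[OF Q k] null[OF S] by (simp add: null_sets_def)
    then show "S \<in> null_sets ?R" using S by (auto simp: emeasure_eq_measure null_sets_def)
  qed
  then show ?thesis using R sm unfolding ac_strict_cdf_def by blast
qed

lemma distr_coordmap_in_Meta:
  assumes PF: "P \<in> Fam n" and P: "distr_on n P" and hp: "has_pos_density n P"
    and gal: "\<And>k. k < n \<Longrightarrow> increasing_galois (\<phi> k) (\<psi> k)"
    and null: "\<And>k S. k < n \<Longrightarrow> S \<in> null_sets lborel \<Longrightarrow> \<phi> k -` S \<in> null_sets lborel"
  shows "distr P (Rn n) (coordmap \<phi> n) \<in> Meta Fam n"
proof -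
  let ?Q = "distr P (Rn n) (coordmap \<phi> n)"
  have meas: "\<And>k. k < n \<Longrightarrow> \<phi> k \<in> borel_measurable borel"
    using gal increasing_galois_measurable by blast
  have Q: "distr_on n ?Q" using P measurable_coordmap[OF meas] by (rule distr_on_distr)
  have ac: "ac_strict_cdf (marg_cdf ?Q k)" if k: "k < n" for k
  proof (rule ac_strict_cdf_marg_cdfI[OF Q k])
    show "strict_mono (marg_cdf ?Q k)"
      using marg_cdf_distr_coordmap[OF P gal k] pos_density_marg_cdf(1)[OF P hp k] gal[OF k]
      by (simp add: increasing_galois_def strict_mono_def)
    fix S :: "real set" assume S: "S \<in> null_sets lborel"
    have "measure ?Q {y \<in> space ?Q. y k \<in> S} = measure P {y \<in> space P. y k \<in> \<phi> k -` S}"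
      using measure_distr_coordmap_cylinder[OF P meas k] S by auto
    also have "\<dots> = 0"
      using null[OF k S] has_pos_density_cylinder_null_iff[OF P hp k, of "\<phi> k -` S"]
      by (auto simp: null_sets_def)
    finally show "measure ?Q {y \<in> space ?Q. y k \<in> S} = 0" .
  qed
  have "mcdf n ?Q x = copula n P (\<lambda>k. marg_cdf ?Q k (x k))" for x
  proof -
    have "mcdf n ?Q x = mcdf n P (\<lambda>k. \<psi> k (x k))" using P gal by (rule mcdf_distr_coordmap)
    also have "\<dots> = copula n P (\<lambda>k. marg_cdf ?Q k (x k))"
      unfolding copula_def
    proof (rule mcdf_cong)
      fix k assume k: "k < n"
      show "\<psi> k (x k) = inv_into UNIV (marg_cdf P k) (marg_cdf ?Q k (x k))"
        using marg_cdf_distr_coordmap[OF P gal k] pos_density_marg_cdf(1)[OF P hp k]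
        by (simp add: inv_into_f_f strict_mono_imp_inj_on)
    qed
    finally show ?thesis .
  qed
  then show ?thesis
    unfolding Meta_def using Q PF ac by blast
qed

lemma quantile_vimage_null:
  assumes M: "distr_on d M" and hp: "has_pos_density d M" and i: "i < d"
    and F: "ac_strict_cdf F" and gal: "increasing_galois \<phi> \<psi>"
    and marg: "\<And>x. marg_cdf M i (\<psi> x) = F x"
    and S: "S \<in> null_sets lborel"
  shows "\<phi> -` S \<in> null_sets lborel"
proof -
  let ?R = "distr M borel (\<lambda>y. y i)"
  note R = marg_cdf_eq_cdf[OF M i]
  interpret R: real_distribution ?R by (rule R(2))
  obtain Q where Q: "real_distribution Q" "absolutely_continuous lborel Q" "F = cdf Q"
    using F by (auto simp: ac_strict_cdf_def)
  have \<phi>: "\<phi> \<in> borel_measurable borel" using gal by (rule increasing_galois_measurable)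
  then have \<phi>R: "\<phi> \<in> borel_measurable ?R" by simp
  have S_borel: "S \<in> sets borel" and vimage_borel: "\<phi> -` S \<in> sets borel"
    using S measurable_sets[OF \<phi>, of S] by (auto simp: null_sets_def)
  have law_\<phi>: "distr ?R borel \<phi> = Q"
  proof (rule cdf_unique)
    show "real_distribution (distr ?R borel \<phi>)"
      using \<phi>R by (auto simp: real_distribution_def real_distribution_axioms_def intro: R.prob_space_distr)
    show "real_distribution Q" by (rule Q(1))
    show "cdf (distr ?R borel \<phi>) = cdf Q"
    proof
      fix x
      have "cdf (distr ?R borel \<phi>) x = measure ?R (\<phi> -` {..x})"
        unfolding cdf_def using \<phi>R by (simp add: measure_distr)
      also have "\<dots> = marg_cdf M i (\<psi> x)"
        by (simp add: increasing_galois_vimage_atMost[OF gal] R(1) cdf_def)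
      finally show "cdf (distr ?R borel \<phi>) x = cdf Q x" using marg Q(3) by simp
    qed
  qed
  have "S \<in> null_sets Q" using S Q(2) unfolding absolutely_continuous_def by blast
  then have "measure Q S = 0" by (simp add: measure_def null_sets_def)
  moreover have "measure Q S = measure M {y \<in> space M. y i \<in> \<phi> -` S}"
    using measure_distr[OF \<phi>R, of S] measure_marginal[OF M i vimage_borel] S_borel
    by (simp add: law_\<phi>)
  ultimately show ?thesis
    using has_pos_density_cylinder_null_iff[OF M hp i vimage_borel] vimage_borel
    by (simp add: null_sets_def)
qed

lemma nth_in_lessThan: "set ixs \<subseteq> {..<d} \<Longrightarrow> k < length ixs \<Longrightarrow> ixs ! k < d"
  using nth_mem by fastforce

lemma measurable_coordmap_nth:
  assumes "set ixs \<subseteq> {..<d}" and "\<And>k. k < d \<Longrightarrow> \<phi> k \<in> borel_measurable borel"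
  shows "coordmap (\<lambda>k. \<phi> (ixs ! k)) (length ixs) \<in> measurable (Rn (length ixs)) (Rn (length ixs))"
  using assms(2)[OF nth_in_lessThan[OF assms(1)]] by (rule measurable_coordmap)

lemma distr_proj_distr_coordmap:
  assumes M: "distr_on d M" and ixs: "set ixs \<subseteq> {..<d}"
    and meas: "\<And>k. k < d \<Longrightarrow> \<phi> k \<in> borel_measurable borel"
  shows "distr (distr M (Rn d) (coordmap \<phi> d)) (Rn (length ixs)) (proj ixs)
       = distr (distr M (Rn (length ixs)) (proj ixs)) (Rn (length ixs))
           (coordmap (\<lambda>k. \<phi> (ixs ! k)) (length ixs))"
proof -
  let ?T = "coordmap \<phi> d" and ?Tixs = "coordmap (\<lambda>k. \<phi> (ixs ! k)) (length ixs)"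
  have T: "?T \<in> measurable M (Rn d)"
    using M measurable_coordmap[OF meas] by (rule distr_on_measurable)
  have proj: "proj ixs \<in> measurable M (Rn (length ixs))"
    using M measurable_proj[OF ixs] by (rule distr_on_measurable)
  have Tixs: "?Tixs \<in> measurable (Rn (length ixs)) (Rn (length ixs))"
    using ixs meas by (rule measurable_coordmap_nth)
  have "distr (distr M (Rn d) ?T) (Rn (length ixs)) (proj ixs) = distr M (Rn (length ixs)) (proj ixs \<circ> ?T)"
    using measurable_proj[OF ixs] T by (rule distr_distr)
  also have "\<dots> = distr M (Rn (length ixs)) (?Tixs \<circ> proj ixs)"
    using proj_coordmap[OF ixs] by (intro distr_cong) auto
  also have "\<dots> = distr (distr M (Rn (length ixs)) (proj ixs)) (Rn (length ixs)) ?Tixs"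
    using Tixs proj by (rule distr_distr[symmetric])
  finally show ?thesis .
qed

lemma measure_joint_distr_coordmap:
  assumes M: "distr_on d M" and "is": "set is \<subseteq> {..<d}" and js: "set js \<subseteq> {..<d}"
    and meas: "\<And>k. k < d \<Longrightarrow> \<phi> k \<in> borel_measurable borel"
    and A: "A \<in> sets (Rn (length is))" and B: "B \<in> sets (Rn (length js))"
  shows "measure (distr M (Rn d) (coordmap \<phi> d))
           {x \<in> space (distr M (Rn d) (coordmap \<phi> d)). proj is x \<in> A \<and> proj js x \<in> B}
       = measure M {x \<in> space M.
           proj is x \<in> coordmap (\<lambda>k. \<phi> (is ! k)) (length is) -` A \<inter> space (Rn (length is)) \<and>
           proj js x \<in> coordmap (\<lambda>k. \<phi> (js ! k)) (length js) -` B \<inter> space (Rn (length js))}"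
proof -
  have "{x \<in> space (Rn d). proj is x \<in> A \<and> proj js x \<in> B}
      = (proj is -` A \<inter> space (Rn d)) \<inter> (proj js -` B \<inter> space (Rn d))"
    by auto
  then have joint_set: "{x \<in> space (Rn d). proj is x \<in> A \<and> proj js x \<in> B} \<in> sets (Rn d)"
    using measurable_sets[OF measurable_proj[OF "is"] A] measurable_sets[OF measurable_proj[OF js] B]
    by auto
  have "coordmap \<phi> d -` {x \<in> space (Rn d). proj is x \<in> A \<and> proj js x \<in> B} \<inter> space (Rn d)
      = {x \<in> space M.
          proj is x \<in> coordmap (\<lambda>k. \<phi> (is ! k)) (length is) -` A \<inter> space (Rn (length is)) \<and>
          proj js x \<in> coordmap (\<lambda>k. \<phi> (js ! k)) (length js) -` B \<inter> space (Rn (length js))}"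
    using proj_coordmap[OF "is"] proj_coordmap[OF js] proj_in_space[of "is"] proj_in_space[of js]
    by (auto simp: coordmap_in_space distr_on_space[OF M])
  then show ?thesis
    using measure_distr_on[OF M measurable_coordmap[OF meas] joint_set] by simp
qed

lemma is_cond_law_distr_coordmap:
  assumes law: "is_cond_law M is js KM" and M: "distr_on d M"
    and "is": "set is \<subseteq> {..<d}" and js: "set js \<subseteq> {..<d}"
    and gal: "\<And>k. k < d \<Longrightarrow> increasing_galois (\<phi> k) (\<psi> k)"
  shows "is_cond_law (distr M (Rn d) (coordmap \<phi> d)) is js
           (\<lambda>z. distr (KM (coordmap (\<lambda>k. \<psi> (js ! k)) (length js) z)) (Rn (length is))
                   (coordmap (\<lambda>k. \<phi> (is ! k)) (length is)))"
    (is "is_cond_law ?N is js ?K")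
proof -
  let ?l = "length is" and ?m = "length js"
  let ?Tis = "coordmap (\<lambda>k. \<phi> (is ! k)) ?l"
  let ?Tjs = "coordmap (\<lambda>k. \<phi> (js ! k)) ?m"
  let ?Hjs = "coordmap (\<lambda>k. \<psi> (js ! k)) ?m"
  have meas: "\<phi> k \<in> borel_measurable borel" "\<psi> k \<in> borel_measurable borel" if "k < d" for k
    using increasing_galois_measurable[OF gal[OF that]] by auto
  have Tis: "?Tis \<in> measurable (Rn ?l) (Rn ?l)" using "is" meas(1) by (rule measurable_coordmap_nth)
  have Tjs: "?Tjs \<in> measurable (Rn ?m) (Rn ?m)" using js meas(1) by (rule measurable_coordmap_nth)
  have Hjs: "?Hjs \<in> measurable (Rn ?m) (Rn ?m)" using js meas(2) by (rule measurable_coordmap_nth)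
  have Hjs_Tjs: "?Hjs (?Tjs w) = w" if "w \<in> space (Rn ?m)" for w
    using that gal nth_in_lessThan[OF js] increasing_galois_left_inverse
    by (intro coordmap_left_inverse) auto
  have KM: "distr_on ?l (KM w)" if "w \<in> space (Rn ?m)" for w
    using law that by (auto simp: is_cond_law_def)
  have KM_meas: "(\<lambda>w. measure (KM w) A) \<in> borel_measurable (Rn ?m)" if "A \<in> sets (Rn ?l)" for A
    using law that by (auto simp: is_cond_law_def)
  have K: "distr_on ?l (?K z)" for z
    using KM[OF coordmap_in_space] Tis by (rule distr_on_distr)
  have K_measure: "measure (?K z) A = measure (KM (?Hjs z)) (?Tis -` A \<inter> space (Rn ?l))"
    if "A \<in> sets (Rn ?l)" for z A
    using KM[OF coordmap_in_space] Tis that by (rule measure_distr_on)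
  have K_meas: "(\<lambda>z. measure (?K z) A) \<in> borel_measurable (Rn ?m)" if A: "A \<in> sets (Rn ?l)" for A
  proof -
    have "?Tis -` A \<inter> space (Rn ?l) \<in> sets (Rn ?l)" using Tis A by (rule measurable_sets)
    then have "(\<lambda>z. measure (KM (?Hjs z)) (?Tis -` A \<inter> space (Rn ?l))) \<in> borel_measurable (Rn ?m)"
      by (rule measurable_compose[OF Hjs KM_meas])
    then show ?thesis using K_measure[OF A] by simp
  qed
  have joint: "measure ?N {x \<in> space ?N. proj is x \<in> A \<and> proj js x \<in> B}
      = (\<integral>z. indicator B z * measure (?K z) A \<partial>distr ?N (Rn ?m) (proj js))"
    if A: "A \<in> sets (Rn ?l)" and B: "B \<in> sets (Rn ?m)" for A B
  proof -
    let ?A' = "?Tis -` A \<inter> space (Rn ?l)" and ?B' = "?Tjs -` B \<inter> space (Rn ?m)"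
    have A': "?A' \<in> sets (Rn ?l)" using Tis A by (rule measurable_sets)
    have B': "?B' \<in> sets (Rn ?m)" using Tjs B by (rule measurable_sets)
    have "measure ?N {x \<in> space ?N. proj is x \<in> A \<and> proj js x \<in> B}
        = measure M {x \<in> space M. proj is x \<in> ?A' \<and> proj js x \<in> ?B'}"
      using M "is" js meas(1) A B by (rule measure_joint_distr_coordmap)
    also have "\<dots> = (\<integral>w. indicator ?B' w * measure (KM w) ?A' \<partial>distr M (Rn ?m) (proj js))"
      using law A' B' unfolding is_cond_law_def by blast
    also have "\<dots> = (\<integral>w. indicator B (?Tjs w) * measure (?K (?Tjs w)) A \<partial>distr M (Rn ?m) (proj js))"
    proof (rule Bochner_Integration.integral_cong[OF refl])
      fix w assume "w \<in> space (distr M (Rn ?m) (proj js))"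
      then have w: "w \<in> space (Rn ?m)" by simp
      have "measure (?K (?Tjs w)) A = measure (KM w) ?A'"
        using K_measure[OF A, of "?Tjs w"] unfolding Hjs_Tjs[OF w] .
      then show "indicator ?B' w * measure (KM w) ?A' = indicator B (?Tjs w) * measure (?K (?Tjs w)) A"
        using w by (simp add: indicator_def)
    qed
    also have "\<dots> = (\<integral>z. indicator B z * measure (?K z) A \<partial>distr (distr M (Rn ?m) (proj js)) (Rn ?m) ?Tjs)"
      using Tjs K_meas[OF A] B by (intro integral_distr[symmetric]) auto
    also have "distr (distr M (Rn ?m) (proj js)) (Rn ?m) ?Tjs = distr ?N (Rn ?m) (proj js)"
      using M js meas(1) by (rule distr_proj_distr_coordmap[symmetric])
    finally show ?thesis .
  qed
  show ?thesis
    unfolding is_cond_law_def using K K_meas joint by blast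
qed

lemma valid_idx_length: "valid_idx d is js \<Longrightarrow> length is \<in> {1..d}"
proof -
  assume idx: "valid_idx d is js"
  then have "length is = card (set is)"
    by (simp add: valid_idx_def distinct_card strict_sorted_iff)
  also have "\<dots> \<le> card {..<d}" using idx by (intro card_mono) (auto simp: valid_idx_def)
  finally show ?thesis using idx by (auto simp: valid_idx_def Suc_le_eq)
qed

theorem mainTheorem3:
  fixes Fam :: "nat \<Rightarrow> (nat \<Rightarrow> real) measure set"
    and D d :: nat
    and M N :: "(nat \<Rightarrow> real) measure"
    and Fs :: "nat \<Rightarrow> real \<Rightarrow> real"
    and "is" js :: "nat list"
  assumes members: "\<forall>d'\<in>{1..D}. \<forall>M'\<in>Fam d'. distr_on d' M' \<and> has_pos_density d' M'"
    and stable: "stable_cond Fam D"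
    and d: "d \<in> {1..D}"
    and M: "M \<in> Fam d"
    and Fs: "\<forall>k<d. ac_strict_cdf (Fs k) \<and> pos_density_cdf (Fs k)"
    and N: "distr_on d N"
    and Ncdf: "\<forall>x. mcdf d N x = copula d M (\<lambda>k. Fs k (x k))"
    and idx: "valid_idx d is js"
  shows "\<exists>K. is_cond_law N is js K \<and>
           (\<forall>z\<in>space (Rn (length js)). K z \<in> Meta Fam (length is))"
proof -
  have MM: "distr_on d M" "has_pos_density d M" using members d M by auto
  define \<phi> where "\<phi> k t = inv_into UNIV (Fs k) (marg_cdf M k t)" for k t
  define \<psi> where "\<psi> k x = inv_into UNIV (marg_cdf M k) (Fs k x)" for k x
  have quantile: "increasing_galois (\<phi> k) (\<psi> k)" "marg_cdf M k (\<psi> k x) = Fs k x" if k: "k < d" for k x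
    using quantile_increasing_galois[of "Fs k" "marg_cdf M k"] pos_density_marg_cdf[OF MM k]
      Fs ac_strict_cdf_range k unfolding \<phi>_def \<psi>_def by (auto simp: ac_strict_cdf_def)
  have N_eq: "N = distr M (Rn d) (coordmap \<phi> d)"
  proof (rule distr_on_eqI_mcdf[OF N])
    have "coordmap \<phi> d \<in> measurable (Rn d) (Rn d)"
      using quantile(1) increasing_galois_measurable by (intro measurable_coordmap) blast
    then show "distr_on d (distr M (Rn d) (coordmap \<phi> d))" by (rule distr_on_distr[OF MM(1)])
    show "mcdf d N x = mcdf d (distr M (Rn d) (coordmap \<phi> d)) x" for x
      using Ncdf mcdf_distr_coordmap[OF MM(1) quantile(1)] by (simp add: copula_def \<psi>_def)
  qed
  obtain KM where law: "is_cond_law M is js KM" and KM: "\<forall>z\<in>space (Rn (length js)). KM z \<in> Fam (length is)"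
    using stable d M idx unfolding stable_cond_def by blast
  have idx_sub: "set is \<subseteq> {..<d}" "set js \<subseteq> {..<d}" using idx by (auto simp: valid_idx_def)
  have l: "length is \<in> {1..D}" using valid_idx_length[OF idx] d by auto
  have "distr (KM w) (Rn (length is)) (coordmap (\<lambda>k. \<phi> (is ! k)) (length is)) \<in> Meta Fam (length is)"
    if w: "w \<in> space (Rn (length js))" for w
  proof (intro distr_coordmap_in_Meta[where \<psi>="\<lambda>k. \<psi> (is ! k)"])
    show "KM w \<in> Fam (length is)" "distr_on (length is) (KM w)" "has_pos_density (length is) (KM w)"
      using members KM w l by auto
    fix k assume "k < length is"
    then have k: "is ! k < d" by (rule nth_in_lessThan[OF idx_sub(1)])
    then show "increasing_galois (\<phi> (is ! k)) (\<psi> (is ! k))" by (rule quantile)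
    show "\<phi> (is ! k) -` S \<in> null_sets lborel" if "S \<in> null_sets lborel" for S
      using quantile_vimage_null[OF MM k _ quantile[OF k] that] Fs k by blast
  qed
  moreover have "is_cond_law N is js (\<lambda>z. distr (KM (coordmap (\<lambda>k. \<psi> (js ! k)) (length js) z))
      (Rn (length is)) (coordmap (\<lambda>k. \<phi> (is ! k)) (length is)))"
    unfolding N_eq using law MM(1) idx_sub quantile(1) by (rule is_cond_law_distr_coordmap)
  ultimately show ?thesis using coordmap_in_space by blast
qed

end
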